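(* Let $L\subseteq Q$ be a dense extension of Lie algebras with $Z(Q)=0$, and suppose that $A(Q)$ is right ideally absorbed into $A_0$. Then $Q$ is an algebra of quotients of $L$.
   Context: Lie algebras over a commutative unital ring $\Phi$. $\mathrm{ad}_x(y)=[x,y]$; $A(Q)$ is the associative subalgebra of $\mathrm{End}_\Phi(Q)$ generated by all $\mathrm{ad}_x$, $x\in Q$; $M(Q)$ is generated by the identity and all $\mathrm{ad}_x$. $A_0=\{\mu\in A(Q):\mu(L)\subseteq L\}$. $Z(Q)=\{a\in Q:[a,Q]=0\}$. An extension $L\subseteq Q$ is dense if the only $\mu\in M(Q)$ with $\mu(L)=0$ is $\mu=0$. For associative algebras $A\subseteq S$, $S$ is right ideally absorbed into $A$ if for every nonzero $q\in S$ there is a two-sided ideal $I$ of $A$ with $\mathrm{l.ann}_A(I)=\{a\in A:aI=0\}=0$ and $0\ne qI\subseteq A$. $Q$ is an algebra of quotients of $L$ if for every nonzero $q\in Q$ there is an ideal $J$ of $L$ with $\mathrm{Ann}_L(J)=\{a\in L:[a,J]=0\}=0$ and $0\ne[J,q]\subseteq L$. *)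

theory Defs
  imports Main "HOL.Modules"
begin

definition lie_algebra :: "('r::comm_ring_1 \<Rightarrow> 'q::ab_group_add \<Rightarrow> 'q) \<Rightarrow> ('q \<Rightarrow> 'q \<Rightarrow> 'q) \<Rightarrow> bool" where
  "lie_algebra sm br \<longleftrightarrow>
     module sm \<and>
     (\<forall>x y z. br (x + y) z = br x z + br y z) \<and>
     (\<forall>x y z. br x (y + z) = br x y + br x z) \<and>
     (\<forall>c x y. br (sm c x) y = sm c (br x y)) \<and>
     (\<forall>c x y. br x (sm c y) = sm c (br x y)) \<and>
     (\<forall>x. br x x = 0) \<and>
     (\<forall>x y z. br x (br y z) + br y (br z x) + br z (br x y) = 0)"

definition lie_subalgebra :: "('r::comm_ring_1 \<Rightarrow> 'q::ab_group_add \<Rightarrow> 'q) \<Rightarrow> ('q \<Rightarrow> 'q \<Rightarrow> 'q) \<Rightarrow> 'q set \<Rightarrow> bool" where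
  "lie_subalgebra sm br L \<longleftrightarrow> 0 \<in> L \<and> (\<forall>x\<in>L. \<forall>y\<in>L. x + y \<in> L) \<and>
     (\<forall>c. \<forall>x\<in>L. sm c x \<in> L) \<and> (\<forall>x\<in>L. \<forall>y\<in>L. br x y \<in> L)"

definition lie_ideal :: "('r::comm_ring_1 \<Rightarrow> 'q::ab_group_add \<Rightarrow> 'q) \<Rightarrow> ('q \<Rightarrow> 'q \<Rightarrow> 'q) \<Rightarrow> 'q set \<Rightarrow> 'q set \<Rightarrow> bool" where
  "lie_ideal sm br L J \<longleftrightarrow> J \<subseteq> L \<and> 0 \<in> J \<and> (\<forall>x\<in>J. \<forall>y\<in>J. x + y \<in> J) \<and>
     (\<forall>c. \<forall>x\<in>J. sm c x \<in> J) \<and> (\<forall>j\<in>J. \<forall>x\<in>L. br j x \<in> J)"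

definition lie_ann :: "('q::ab_group_add \<Rightarrow> 'q \<Rightarrow> 'q) \<Rightarrow> 'q set \<Rightarrow> 'q set \<Rightarrow> 'q set" where
  "lie_ann br L J = {a \<in> L. \<forall>j\<in>J. br a j = 0}"

definition lie_center :: "('q::ab_group_add \<Rightarrow> 'q \<Rightarrow> 'q) \<Rightarrow> 'q set" where
  "lie_center br = {a. \<forall>y. br a y = 0}"

text \<open>A(Q): associative Phi-subalgebra of End(Q) generated by the ad_x (ad_x = br x).\<close>
inductive_set A_alg :: "('r::comm_ring_1 \<Rightarrow> 'q::ab_group_add \<Rightarrow> 'q) \<Rightarrow> ('q \<Rightarrow> 'q \<Rightarrow> 'q) \<Rightarrow> ('q \<Rightarrow> 'q) set"
  for sm br where
  ad: "br x \<in> A_alg sm br"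
| add: "f \<in> A_alg sm br \<Longrightarrow> g \<in> A_alg sm br \<Longrightarrow> (\<lambda>y. f y + g y) \<in> A_alg sm br"
| smul: "f \<in> A_alg sm br \<Longrightarrow> (\<lambda>y. sm c (f y)) \<in> A_alg sm br"
| comp: "f \<in> A_alg sm br \<Longrightarrow> g \<in> A_alg sm br \<Longrightarrow> f \<circ> g \<in> A_alg sm br"

inductive_set M_alg :: "('r::comm_ring_1 \<Rightarrow> 'q::ab_group_add \<Rightarrow> 'q) \<Rightarrow> ('q \<Rightarrow> 'q \<Rightarrow> 'q) \<Rightarrow> ('q \<Rightarrow> 'q) set"
  for sm br where
  ident: "id \<in> M_alg sm br"
| ad: "br x \<in> M_alg sm br"
| add: "f \<in> M_alg sm br \<Longrightarrow> g \<in> M_alg sm br \<Longrightarrow> (\<lambda>y. f y + g y) \<in> M_alg sm br"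
| smul: "f \<in> M_alg sm br \<Longrightarrow> (\<lambda>y. sm c (f y)) \<in> M_alg sm br"
| comp: "f \<in> M_alg sm br \<Longrightarrow> g \<in> M_alg sm br \<Longrightarrow> f \<circ> g \<in> M_alg sm br"

definition A0_alg :: "('r::comm_ring_1 \<Rightarrow> 'q::ab_group_add \<Rightarrow> 'q) \<Rightarrow> ('q \<Rightarrow> 'q \<Rightarrow> 'q) \<Rightarrow> 'q set \<Rightarrow> ('q \<Rightarrow> 'q) set" where
  "A0_alg sm br L = {\<mu> \<in> A_alg sm br. \<mu> ` L \<subseteq> L}"

definition dense_ext :: "('r::comm_ring_1 \<Rightarrow> 'q::ab_group_add \<Rightarrow> 'q) \<Rightarrow> ('q \<Rightarrow> 'q \<Rightarrow> 'q) \<Rightarrow> 'q set \<Rightarrow> bool" where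
  "dense_ext sm br L \<longleftrightarrow> (\<forall>\<mu> \<in> M_alg sm br. (\<forall>x\<in>L. \<mu> x = 0) \<longrightarrow> \<mu> = (\<lambda>_. 0))"

definition assoc_ideal :: "('r::comm_ring_1 \<Rightarrow> 'q::ab_group_add \<Rightarrow> 'q) \<Rightarrow> ('q \<Rightarrow> 'q) set \<Rightarrow> ('q \<Rightarrow> 'q) set \<Rightarrow> bool" where
  "assoc_ideal sm A I \<longleftrightarrow> I \<subseteq> A \<and> (\<lambda>_. 0) \<in> I \<and>
     (\<forall>f\<in>I. \<forall>g\<in>I. (\<lambda>y. f y + g y) \<in> I) \<and> (\<forall>c. \<forall>f\<in>I. (\<lambda>y. sm c (f y)) \<in> I) \<and>
     (\<forall>a\<in>A. \<forall>f\<in>I. a \<circ> f \<in> I \<and> f \<circ> a \<in> I)"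

definition left_ann :: "('q::ab_group_add \<Rightarrow> 'q) set \<Rightarrow> ('q \<Rightarrow> 'q) set \<Rightarrow> ('q \<Rightarrow> 'q) set" where
  "left_ann A I = {a \<in> A. \<forall>f\<in>I. a \<circ> f = (\<lambda>_. 0)}"

text \<open>S is right ideally absorbed into A (A \<subseteq> S).\<close>
definition right_ideally_absorbed :: "('r::comm_ring_1 \<Rightarrow> 'q::ab_group_add \<Rightarrow> 'q) \<Rightarrow> ('q \<Rightarrow> 'q) set \<Rightarrow> ('q \<Rightarrow> 'q) set \<Rightarrow> bool" where
  "right_ideally_absorbed sm S A \<longleftrightarrow>
     (\<forall>q\<in>S. q \<noteq> (\<lambda>_. 0) \<longrightarrow> (\<exists>I. assoc_ideal sm A I \<and> left_ann A I = {\<lambda>_. 0} \<and>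
         (\<lambda>f. q \<circ> f) ` I \<noteq> {\<lambda>_. 0} \<and> (\<lambda>f. q \<circ> f) ` I \<subseteq> A))"

text \<open>Q (the whole carrier type) is an algebra of quotients of L.\<close>
definition algebra_of_quotients :: "('r::comm_ring_1 \<Rightarrow> 'q::ab_group_add \<Rightarrow> 'q) \<Rightarrow> ('q \<Rightarrow> 'q \<Rightarrow> 'q) \<Rightarrow> 'q set \<Rightarrow> bool" where
  "algebra_of_quotients sm br L \<longleftrightarrow>
     (\<forall>q. q \<noteq> 0 \<longrightarrow> (\<exists>J. lie_ideal sm br L J \<and> lie_ann br L J = {0} \<and>
         (\<lambda>j. br j q) ` J \<noteq> {0} \<and> (\<lambda>j. br j q) ` J \<subseteq> L))"

end

theory Submission
  imports Defs
begin

text \<open>Fix q \<noteq> 0. Since Z(Q) = 0, ad_q \<noteq> 0, so absorption yields an ideal I of A_0 with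
  zero left annihilator and 0 \<noteq> ad_q I \<subseteq> A_0. The candidate ideal of L is J = I(L), the
  additive span of all \<mu> x with \<mu> \<in> I, x \<in> L: it is a Lie ideal of L because ad_x \<circ> \<mu> \<in> I,
  and [J, q] = -ad_q I(L) \<subseteq> L. Density says an element of A(Q) vanishing on L is zero; hence
  [J, q] \<noteq> 0 because ad_q I \<noteq> 0, and every a \<in> Ann_L(J) has ad_a I = 0, so ad_a lies in the
  left annihilator of I, whence ad_a = 0 and a \<in> Z(Q) = 0.\<close>

inductive_set image_span :: "('q::ab_group_add \<Rightarrow> 'q) set \<Rightarrow> 'q set \<Rightarrow> 'q set" for I L where
  zero: "0 \<in> image_span I L"
| elem: "\<mu> \<in> I \<Longrightarrow> x \<in> L \<Longrightarrow> \<mu> x \<in> image_span I L"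
| add: "a \<in> image_span I L \<Longrightarrow> b \<in> image_span I L \<Longrightarrow> a + b \<in> image_span I L"

lemma A_alg_subset_M_alg: "A_alg sm br \<subseteq> M_alg sm br"
proof
  fix f assume "f \<in> A_alg sm br"
  then show "f \<in> M_alg sm br"
    by (induction rule: A_alg.induct) (blast intro: M_alg.intros)+
qed

lemma dense_ext_A_alg_eq_zero:
  assumes "dense_ext sm br L" "\<mu> \<in> A_alg sm br" "\<forall>x\<in>L. \<mu> x = 0"
  shows "\<mu> = (\<lambda>_. 0)"
  using assms A_alg_subset_M_alg unfolding dense_ext_def by blast

lemma ad_neq_zero:
  assumes "lie_center br = {0}" "q \<noteq> 0"
  shows "br q \<noteq> (\<lambda>_. 0)"
  using assms unfolding lie_center_def by auto

lemma ad_in_A0_alg: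
  assumes "lie_subalgebra sm br L" "x \<in> L"
  shows "br x \<in> A0_alg sm br L"
  using assms A_alg.ad unfolding A0_alg_def lie_subalgebra_def by auto

lemma image_span_subset:
  assumes "lie_subalgebra sm br L" "I \<subseteq> A0_alg sm br L"
  shows "image_span I L \<subseteq> L"
proof
  fix z assume "z \<in> image_span I L"
  then show "z \<in> L"
    using assms unfolding lie_subalgebra_def A0_alg_def
    by (induction rule: image_span.induct) auto
qed

context
  fixes sm :: "'r::comm_ring_1 \<Rightarrow> 'q::ab_group_add \<Rightarrow> 'q" and br :: "'q \<Rightarrow> 'q \<Rightarrow> 'q"
  assumes lie: "lie_algebra sm br"
begin

lemma lie_module: "module sm"
  using lie unfolding lie_algebra_def by blast

lemma lie_bracket_add_left: "br (x + y) z = br x z + br y z"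
  using lie unfolding lie_algebra_def by blast

lemma lie_bracket_zero_left: "br 0 y = 0"
  using lie_bracket_add_left[of 0 0 y] by simp

lemma lie_bracket_antisym: "br x y = - br y x"
proof -
  have add_right: "br u (v + w) = br u v + br u w" for u v w
    using lie unfolding lie_algebra_def by blast
  have alt: "br u u = 0" for u
    using lie unfolding lie_algebra_def by blast
  have "0 = br (x + y) (x + y)" by (rule alt[symmetric])
  also have "\<dots> = br x x + br x y + (br y x + br y y)"
    by (simp add: lie_bracket_add_left add_right)
  also have "\<dots> = br x y + br y x"
    by (simp add: alt)
  finally show ?thesis by (simp add: eq_neg_iff_add_eq_0)
qed

lemma lie_scale_minus_one: "sm (-1) x = - x"
  using module.scale_minus_left[OF lie_module, of 1 x] module.scale_one[OF lie_module] by simp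

lemma lie_subalgebra_uminus:
  assumes "lie_subalgebra sm br L" "x \<in> L"
  shows "- x \<in> L"
  using assms lie_scale_minus_one unfolding lie_subalgebra_def by metis

lemma image_span_scale_closed:
  assumes I: "\<And>c \<mu>. \<mu> \<in> I \<Longrightarrow> (\<lambda>y. sm c (\<mu> y)) \<in> I" and z: "z \<in> image_span I L"
  shows "sm c z \<in> image_span I L"
  using z
proof (induction rule: image_span.induct)
  case zero then show ?case
    by (simp add: module.scale_zero_right[OF lie_module] image_span.zero)
next
  case (elem \<mu> x) then show ?case
    using image_span.elem[OF I] by fastforce
next
  case (add a b) then show ?case
    by (simp add: module.scale_right_distrib[OF lie_module] image_span.add)
qed

lemma image_span_bracket_closed:
  assumes L: "lie_subalgebra sm br L" and I: "assoc_ideal sm (A0_alg sm br L) I"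
    and z: "z \<in> image_span I L" and x: "x \<in> L"
  shows "br z x \<in> image_span I L"
  using z
proof (induction rule: image_span.induct)
  case zero then show ?case by (simp add: lie_bracket_zero_left image_span.zero)
next
  case (elem \<mu> y)
  have "br x \<circ> \<mu> \<in> I"
    using I ad_in_A0_alg[OF L x] elem(1) unfolding assoc_ideal_def by blast
  then have "(\<lambda>w. sm (-1) ((br x \<circ> \<mu>) w)) \<in> I"
    using I unfolding assoc_ideal_def by blast
  from image_span.elem[OF this elem(2)] show ?case
    by (simp add: lie_scale_minus_one lie_bracket_antisym[of x])
next
  case (add a b) then show ?case by (simp add: lie_bracket_add_left image_span.add)
qed

lemma lie_ideal_image_span:
  assumes L: "lie_subalgebra sm br L" and I: "assoc_ideal sm (A0_alg sm br L) I"
  shows "lie_ideal sm br L (image_span I L)"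
proof -
  have "(\<lambda>y. sm c (\<mu> y)) \<in> I" if "\<mu> \<in> I" for c \<mu>
    using I that unfolding assoc_ideal_def by blast
  moreover have "image_span I L \<subseteq> L"
    using image_span_subset[OF L] I unfolding assoc_ideal_def by blast
  ultimately show ?thesis
    using image_span_scale_closed image_span_bracket_closed[OF L I]
    unfolding lie_ideal_def by (auto intro: image_span.zero image_span.add)
qed

lemma bracket_image_span_subset:
  assumes L: "lie_subalgebra sm br L" and ad_q: "(\<lambda>f. br q \<circ> f) ` I \<subseteq> A0_alg sm br L"
  shows "(\<lambda>j. br j q) ` image_span I L \<subseteq> L"
proof clarify
  fix z assume "z \<in> image_span I L"
  then show "br z q \<in> L"
  proof (induction rule: image_span.induct)
    case zero then show ?case using L by (simp add: lie_bracket_zero_left lie_subalgebra_def)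
  next
    case (elem \<mu> x)
    then have "br q \<circ> \<mu> \<in> A0_alg sm br L" using ad_q by blast
    then have "br q (\<mu> x) \<in> L" using elem(2) unfolding A0_alg_def by auto
    then show ?case using lie_subalgebra_uminus[OF L] lie_bracket_antisym[of "\<mu> x" q] by simp
  next
    case (add a b) then show ?case
      using L by (simp add: lie_bracket_add_left lie_subalgebra_def)
  qed
qed

lemma bracket_image_span_neq_zero:
  assumes dense: "dense_ext sm br L"
    and I: "assoc_ideal sm (A0_alg sm br L) I"
    and ad_q: "(\<lambda>f. br q \<circ> f) ` I \<noteq> {\<lambda>_. 0}" "(\<lambda>f. br q \<circ> f) ` I \<subseteq> A0_alg sm br L"
  shows "(\<lambda>j. br j q) ` image_span I L \<noteq> {0}"
proof
  assume vanish: "(\<lambda>j. br j q) ` image_span I L = {0}"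
  have "br q \<circ> \<mu> = (\<lambda>_. 0)" if "\<mu> \<in> I" for \<mu>
  proof (rule dense_ext_A_alg_eq_zero[OF dense])
    show "br q \<circ> \<mu> \<in> A_alg sm br" using ad_q(2) that unfolding A0_alg_def by blast
    show "\<forall>x\<in>L. (br q \<circ> \<mu>) x = 0"
      using vanish that image_span.elem[OF that] lie_bracket_antisym[of q] by fastforce
  qed
  moreover have "(\<lambda>_. 0) \<in> I" using I unfolding assoc_ideal_def by blast
  ultimately have "(\<lambda>f. br q \<circ> f) ` I = {\<lambda>_. 0}" by (auto simp del: fun_eq_iff)
  with ad_q(1) show False ..
qed

lemma lie_ann_image_span:
  assumes L: "lie_subalgebra sm br L" and dense: "dense_ext sm br L"
    and center: "lie_center br = {0}"
    and I: "assoc_ideal sm (A0_alg sm br L) I" "left_ann (A0_alg sm br L) I = {\<lambda>_. 0}"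
  shows "lie_ann br L (image_span I L) = {0}"
proof
  show "{0} \<subseteq> lie_ann br L (image_span I L)"
    using L unfolding lie_ann_def lie_subalgebra_def by (auto simp: lie_bracket_zero_left)
next
  show "lie_ann br L (image_span I L) \<subseteq> {0}"
  proof
    fix a assume "a \<in> lie_ann br L (image_span I L)"
    then have a: "a \<in> L" "\<forall>j\<in>image_span I L. br a j = 0" unfolding lie_ann_def by auto
    have "br a \<circ> \<mu> = (\<lambda>_. 0)" if "\<mu> \<in> I" for \<mu>
    proof (rule dense_ext_A_alg_eq_zero[OF dense])
      show "br a \<circ> \<mu> \<in> A_alg sm br"
        using I(1) that A_alg.comp[OF A_alg.ad] unfolding assoc_ideal_def A0_alg_def by blast
      show "\<forall>x\<in>L. (br a \<circ> \<mu>) x = 0" using a(2) that by (auto intro: image_span.elem)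
    qed
    then have "br a \<in> left_ann (A0_alg sm br L) I"
      unfolding left_ann_def using ad_in_A0_alg[OF L a(1)] by blast
    then have "br a = (\<lambda>_. 0)" using I(2) by blast
    then show "a \<in> {0}" using ad_neq_zero[OF center] by blast
  qed
qed

end

theorem mainTheorem20:
  fixes sm :: "'r::comm_ring_1 \<Rightarrow> 'q::ab_group_add \<Rightarrow> 'q"
    and br :: "'q \<Rightarrow> 'q \<Rightarrow> 'q"
    and L :: "'q set"
  assumes "lie_algebra sm br"
    and "lie_subalgebra sm br L"
    and "dense_ext sm br L"
    and "lie_center br = {0}"
    and "right_ideally_absorbed sm (A_alg sm br) (A0_alg sm br L)"
  shows "algebra_of_quotients sm br L"
  unfolding algebra_of_quotients_def
proof (intro allI impI)
  fix q :: 'q assume "q \<noteq> 0"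
  then have "br q \<in> A_alg sm br" "br q \<noteq> (\<lambda>_. 0)"
    using A_alg.ad ad_neq_zero[OF assms(4)] by blast+
  then obtain I where I: "assoc_ideal sm (A0_alg sm br L) I" "left_ann (A0_alg sm br L) I = {\<lambda>_. 0}"
    and ad_q: "(\<lambda>f. br q \<circ> f) ` I \<noteq> {\<lambda>_. 0}" "(\<lambda>f. br q \<circ> f) ` I \<subseteq> A0_alg sm br L"
    using assms(5) unfolding right_ideally_absorbed_def by meson
  show "\<exists>J. lie_ideal sm br L J \<and> lie_ann br L J = {0} \<and>
      (\<lambda>j. br j q) ` J \<noteq> {0} \<and> (\<lambda>j. br j q) ` J \<subseteq> L"
  proof (intro exI conjI)
    show "lie_ideal sm br L (image_span I L)"
      by (rule lie_ideal_image_span[OF assms(1,2) I(1)])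
    show "lie_ann br L (image_span I L) = {0}"
      by (rule lie_ann_image_span[OF assms(1,2,3,4) I])
    show "(\<lambda>j. br j q) ` image_span I L \<noteq> {0}"
      by (rule bracket_image_span_neq_zero[OF assms(1,3) I(1) ad_q])
    show "(\<lambda>j. br j q) ` image_span I L \<subseteq> L"
      by (rule bracket_image_span_subset[OF assms(1,2) ad_q(2)])
  qed
qed

end
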